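(* Let $n\ge 3$ and $m\ge 1$ be integers, and let $Q_{n,1},\dots,Q_{n,m}$ be the partition of $\{0,1,\dots,m+1\}^n$ defined below. Then for every $1\le i<j\le m$ and every unit vector $v\in\mathbb{Z}^n$ parallel to a coordinate axis, $Q_{n,i}+(m+2)v$ and $Q_{n,j}$ are adjacent (the partition is externally adjacent).
   Context: Define $f:\{0,\dots,m+1\}^3\to\{1,\dots,m\}$ by: $f(x,y,z)=y$ if $0\le x\le m$, $1\le y\le m$, $z=0$; $f=x$ if $1\le x\le m$, $0\le y\le m$, $z=m+1$; $f=y$ if $x=0$, $1\le y\le m$, $1\le z\le m$; $f=x$ if $1\le x\le m$, $y=0$, $1\le z\le m$; $f=z$ if $1\le x\le m+1$, $1\le y\le m+1$, $1\le z\le m$; and $f=1$ at all remaining points. Let $f_3=f$ and for $n\ge4$: $f_n(x_1,\dots,x_n)=f_{n-1}(x_1,x_2,x_3,\dots,x_{n-1})$ if $0\le x_n\le m$, and $f_n(x_1,\dots,x_n)=f_{n-1}(m+1-x_2,x_1,x_3,\dots,x_{n-1})$ if $x_n=m+1$. Let $Q_{n,i}=\{x\in\{0,\dots,m+1\}^n: f_n(x)=i\}$. Two disjoint sets $P,Q\subset\mathbb{Z}^n$ are adjacent if there exist $p\in P$, $q\in Q$ and a unit vector $v$ parallel to a coordinate axis with $p+v=q$. *)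

theory Defs
  imports Main
begin

text \<open>Points of Z^n are represented as integer lists of length n.\<close>

definition f3 :: "int \<Rightarrow> int \<Rightarrow> int \<Rightarrow> int \<Rightarrow> int" where
  "f3 m x y z =
    (if 0 \<le> x \<and> x \<le> m \<and> 1 \<le> y \<and> y \<le> m \<and> z = 0 then y
     else if 1 \<le> x \<and> x \<le> m \<and> 0 \<le> y \<and> y \<le> m \<and> z = m + 1 then x
     else if x = 0 \<and> 1 \<le> y \<and> y \<le> m \<and> 1 \<le> z \<and> z \<le> m then y
     else if 1 \<le> x \<and> x \<le> m \<and> y = 0 \<and> 1 \<le> z \<and> z \<le> m then x
     else if 1 \<le> x \<and> x \<le> m + 1 \<and> 1 \<le> y \<and> y \<le> m + 1 \<and> 1 \<le> z \<and> z \<le> m then z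
     else 1)"

text \<open>fn m n xs = f_n(x_1,...,x_n) where xs = [x_1,...,x_n] (0-indexed list).\<close>
fun fn :: "int \<Rightarrow> nat \<Rightarrow> int list \<Rightarrow> int" where
  "fn m n xs =
    (if n \<le> 3 then f3 m (xs ! 0) (xs ! 1) (xs ! 2)
     else if 0 \<le> xs ! (n - 1) \<and> xs ! (n - 1) \<le> m
       then fn m (n - 1) (take (n - 1) xs)
       else fn m (n - 1) ((m + 1 - xs ! 1) # xs ! 0 # drop 2 (take (n - 1) xs)))"

definition Q :: "nat \<Rightarrow> nat \<Rightarrow> nat \<Rightarrow> int list set" where
  "Q n m i = {x. length x = n \<and> (\<forall>k<n. 0 \<le> x ! k \<and> x ! k \<le> int m + 1)
                 \<and> fn (int m) n x = int i}"

definition vadd :: "int list \<Rightarrow> int list \<Rightarrow> int list" where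
  "vadd xs ys = map2 (+) xs ys"

definition vscale :: "int \<Rightarrow> int list \<Rightarrow> int list" where
  "vscale c xs = map ((*) c) xs"

definition axis_units :: "nat \<Rightarrow> int list set" where
  "axis_units n = {(replicate n 0)[k := s] | k s. k < n \<and> (s = 1 \<or> s = -1)}"

definition adjacent :: "nat \<Rightarrow> int list set \<Rightarrow> int list set \<Rightarrow> bool" where
  "adjacent n P R \<longleftrightarrow> P \<inter> R = {} \<and>
     (\<exists>p\<in>P. \<exists>q\<in>R. \<exists>v\<in>axis_units n. vadd p v = q)"

end

theory Submission
  imports Defs
begin

text \<open>
  A point of \<open>Q n m i\<close> is moved by \<open>(m+2)e\<^sub>k\<close> out of the grid, so the translate
  is disjoint from \<open>Q n m j\<close>; it touches \<open>Q n m j\<close> only across opposite facets, since a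
  point with \<open>x\<^sub>k = 0\<close> lands at \<open>x\<^sub>k = m+2\<close>, next to the point with \<open>x\<^sub>k = m+1\<close>
  and the same other coordinates. Hence it suffices that for every axis k and all colours a, b
  some grid line parallel to that axis has colour a at \<open>x\<^sub>k = 0\<close> and colour b at
  \<open>x\<^sub>k = m+1\<close>. For the first three axes this is read off the pieces of f; for a later axis the twist
  \<open>(x\<^sub>1, x\<^sub>2) \<mapsto> (m+1-x\<^sub>2, x\<^sub>1)\<close> at \<open>x\<^sub>k = m+1\<close> turns the colour read from
  \<open>x\<^sub>2\<close> at one end into the colour read from \<open>x\<^sub>1\<close> at the other.
\<close>

declare fn.simps [simp del]

definition cube :: "nat \<Rightarrow> int \<Rightarrow> int list set" where
  "cube n M = {x. length x = n \<and> (\<forall>k<n. 0 \<le> x ! k \<and> x ! k \<le> M + 1)}"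

lemma Q_eq_cube: "Q n m i = {x \<in> cube n (int m). fn (int m) n x = int i}"
  by (auto simp: Q_def cube_def)

lemma list_update_in_cube:
  "x \<in> cube n M \<Longrightarrow> 0 \<le> c \<Longrightarrow> c \<le> M + 1 \<Longrightarrow> x[k := c] \<in> cube n M"
  by (cases "k < n") (auto simp: cube_def nth_list_update)

lemma fn_3: "fn m 3 xs = f3 m (xs ! 0) (xs ! 1) (xs ! 2)"
  by (simp add: fn.simps)

lemma fn_snoc_inner:
  "3 \<le> length xs \<Longrightarrow> 0 \<le> y \<Longrightarrow> y \<le> m \<Longrightarrow>
    fn m (Suc (length xs)) (xs @ [y]) = fn m (length xs) xs"
  by (subst fn.simps) (simp add: nth_append)

lemma fn_snoc_top:
  assumes "3 \<le> length xs"
  shows "fn m (Suc (length xs)) (xs @ [m + 1]) =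
         fn m (length xs) ((m + 1 - xs ! 1) # xs ! 0 # drop 2 xs)"
proof -
  obtain a b c rest where "xs = a # b # c # rest"
    using assms by (cases xs; cases "tl xs"; cases "tl (tl xs)") auto
  then show ?thesis
    by (subst fn.simps) (simp add: nth_append)
qed

lemma fn_append_zeros:
  assumes "3 \<le> length xs" and "0 \<le> m" and "length xs + r = N"
  shows "fn m N (xs @ replicate r 0) = fn m (length xs) xs"
  using assms(3)
proof (induction r arbitrary: N)
  case (Suc r)
  have "xs @ replicate (Suc r) 0 = (xs @ replicate r 0) @ [0]"
    by (simp add: replicate_append_same)
  with Suc fn_snoc_inner[of "xs @ replicate r 0" 0 m] assms(1,2) show ?case
    by simp
qed simp

lemma f3_opposite_facets:
  fixes m a b :: int
  assumes "k < 3" and "1 \<le> a" "a \<le> m" "1 \<le> b" "b \<le> m"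
  shows "\<exists>x\<in>cube 3 m. fn m 3 (x[k := 0]) = a \<and> fn m 3 (x[k := m + 1]) = b"
proof -
  define x where "x = (if k = 0 then [0, a, b] else if k = 1 then [a, 0, b] else [b, a, 0])"
  have k: "k = 0 \<or> k = 1 \<or> k = 2"
    using assms(1) by auto
  have "x \<in> cube 3 m"
    using assms by (auto simp: x_def cube_def less_Suc_eq numeral_3_eq_3)
  moreover have "fn m 3 (x[k := 0]) = a" "fn m 3 (x[k := m + 1]) = b"
    using k assms(2-) by (auto simp: x_def fn_3 f3_def)
  ultimately show ?thesis
    by blast
qed

lemma fn_opposite_facets_low:
  fixes m a b :: int
  assumes "k < 3" and "3 \<le> n" and "1 \<le> a" "a \<le> m" "1 \<le> b" "b \<le> m"
  shows "\<exists>x\<in>cube n m. fn m n (x[k := 0]) = a \<and> fn m n (x[k := m + 1]) = b"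
proof -
  obtain w where w: "w \<in> cube 3 m" "fn m 3 (w[k := 0]) = a" "fn m 3 (w[k := m + 1]) = b"
    using f3_opposite_facets assms by blast
  have lw: "length w = 3"
    using w(1) by (simp add: cube_def)
  define x where "x = w @ replicate (n - 3) 0"
  have "x[k := c] = w[k := c] @ replicate (n - 3) 0" for c
    using assms(1) lw by (simp add: x_def list_update_append)
  then have fn_x: "fn m n (x[k := c]) = fn m 3 (w[k := c])" for c
    using fn_append_zeros[of "w[k := c]" m "n - 3" n] lw assms by simp
  have "x \<in> cube n m"
    using w(1) assms(2-4) by (auto simp: x_def cube_def nth_append)
  with w fn_x show ?thesis
    by metis
qed

lemma fn_opposite_facets_high:
  fixes m a b :: int
  assumes "3 \<le> k" "k < n" and "1 \<le> a" "a \<le> m" "1 \<le> b" "b \<le> m"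
  shows "\<exists>x\<in>cube n m. fn m n (x[k := 0]) = a \<and> fn m n (x[k := m + 1]) = b"
proof -
  define u where "u = [b, a, 0] @ replicate (k - 3) 0"
  define x where "x = u @ 0 # replicate (n - k - 1) 0"
  have lu: "length u = k"
    using assms by (simp add: u_def)
  have "x[k := c] = (u @ [c]) @ replicate (n - k - 1) 0" for c
    using lu by (simp add: x_def list_update_append)
  then have fn_x: "fn m n (x[k := c]) = fn m (Suc k) (u @ [c])" for c
    using fn_append_zeros[of "u @ [c]" m "n - k - 1" n] lu assms by simp
  have "fn m k u = f3 m b a 0"
    using fn_append_zeros[of "[b, a, 0]" m "k - 3" k] fn_3[of m "[b, a, 0]"] assms
    by (simp add: u_def numeral_3_eq_3)
  then have "fn m n (x[k := 0]) = a"
    using fn_x fn_snoc_inner[of u 0 m] lu assms by (simp add: f3_def)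
  moreover have "fn m k ((m + 1 - u ! 1) # u ! 0 # drop 2 u) = f3 m (m + 1 - a) b 0"
    using fn_append_zeros[of "[m + 1 - a, b, 0]" m "k - 3" k] fn_3[of m "[m + 1 - a, b, 0]"]
      assms
    by (simp add: u_def numeral_3_eq_3)
  then have "fn m n (x[k := m + 1]) = b"
    using fn_x fn_snoc_top[of u m] lu assms by (simp add: f3_def)
  moreover have "x \<in> cube n m"
    using assms by (auto simp: x_def u_def cube_def nth_append nth_Cons split: nat.splits)
  ultimately show ?thesis
    by blast
qed

lemma fn_opposite_facets:
  fixes m a b :: int
  assumes "3 \<le> n" "k < n" and "1 \<le> a" "a \<le> m" "1 \<le> b" "b \<le> m"
  shows "\<exists>x\<in>cube n m. fn m n (x[k := 0]) = a \<and> fn m n (x[k := m + 1]) = b"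
  using fn_opposite_facets_low fn_opposite_facets_high assms by (cases "k < 3") auto

lemma vscale_axis: "vscale c ((replicate n 0)[k := s]) = (replicate n 0)[k := c * s]"
  by (simp add: vscale_def map_update)

lemma vadd_axis:
  "length p = n \<Longrightarrow> k < n \<Longrightarrow> vadd p ((replicate n 0)[k := s]) = p[k := p ! k + s]"
  by (rule nth_equalityI) (auto simp: vadd_def nth_list_update)

lemma axis_unit_in_axis_units:
  "k < n \<Longrightarrow> s = 1 \<or> s = -1 \<Longrightarrow> (replicate n 0)[k := s] \<in> axis_units n"
  by (auto simp: axis_units_def)

lemma vadd_axis_shift_notin_cube:
  assumes "x \<in> cube n M" "k < n" "s = 1 \<or> s = -1"
  shows "vadd x (vscale (M + 2) ((replicate n 0)[k := s])) \<notin> cube n M"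
proof
  assume "vadd x (vscale (M + 2) ((replicate n 0)[k := s])) \<in> cube n M"
  then have "0 \<le> x ! k + (M + 2) * s" "x ! k + (M + 2) * s \<le> M + 1"
    using assms(1,2) by (auto simp: vscale_axis vadd_axis cube_def)
  moreover have "0 \<le> x ! k" "x ! k \<le> M + 1"
    using assms(1,2) by (auto simp: cube_def)
  ultimately show False
    using assms(3) by auto
qed

lemma shifted_Q_disjoint_Q:
  assumes "k < n" "s = 1 \<or> s = -1"
  shows "(\<lambda>x. vadd x (vscale (int m + 2) ((replicate n 0)[k := s]))) ` Q n m i \<inter> Q n m j = {}"
  using vadd_axis_shift_notin_cube[OF _ assms] by (auto simp: Q_eq_cube)

lemma shifted_Q_touches_Q:
  assumes "3 \<le> n" "k < n" "s = 1 \<or> s = -1" and "1 \<le> i" "i \<le> m" "1 \<le> j" "j \<le> m"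
  shows "\<exists>p\<in>Q n m i. \<exists>q\<in>Q n m j. \<exists>u\<in>axis_units n.
           vadd (vadd p (vscale (int m + 2) ((replicate n 0)[k := s]))) u = q"
  using assms(3)
proof
  assume "s = 1"
  obtain x where x: "x \<in> cube n (int m)" "fn (int m) n (x[k := 0]) = int i"
      "fn (int m) n (x[k := int m + 1]) = int j"
    using fn_opposite_facets[of n k "int i" "int m" "int j"] assms by auto
  have "length x = n"
    using x(1) by (simp add: cube_def)
  then have "vadd (vadd (x[k := 0]) (vscale (int m + 2) ((replicate n 0)[k := s])))
               ((replicate n 0)[k := -1]) = x[k := int m + 1]"
    using \<open>s = 1\<close> assms(2) by (simp add: vscale_axis vadd_axis add.commute)
  moreover have "x[k := 0] \<in> Q n m i" "x[k := int m + 1] \<in> Q n m j"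
    using x by (auto simp: Q_eq_cube list_update_in_cube)
  ultimately show ?thesis
    using axis_unit_in_axis_units[OF assms(2)] by blast
next
  assume "s = -1"
  obtain x where x: "x \<in> cube n (int m)" "fn (int m) n (x[k := 0]) = int j"
      "fn (int m) n (x[k := int m + 1]) = int i"
    using fn_opposite_facets[of n k "int j" "int m" "int i"] assms by auto
  have "length x = n"
    using x(1) by (simp add: cube_def)
  then have "vadd (vadd (x[k := int m + 1]) (vscale (int m + 2) ((replicate n 0)[k := s])))
               ((replicate n 0)[k := 1]) = x[k := 0]"
    using \<open>s = -1\<close> assms(2) by (simp add: vscale_axis vadd_axis add.commute)
  moreover have "x[k := int m + 1] \<in> Q n m i" "x[k := 0] \<in> Q n m j"
    using x by (auto simp: Q_eq_cube list_update_in_cube)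
  ultimately show ?thesis
    using axis_unit_in_axis_units[OF assms(2)] by blast
qed

theorem lemma5p4:
  fixes n m i j :: nat
  assumes "n \<ge> 3" and "m \<ge> 1" and "1 \<le> i" and "i < j" and "j \<le> m"
      and "v \<in> axis_units n"
  shows "adjacent n ((\<lambda>x. vadd x (vscale (int m + 2) v)) ` Q n m i) (Q n m j)"
proof -
  obtain k s where v: "v = (replicate n 0)[k := s]" and k: "k < n" and s: "s = 1 \<or> s = -1"
    using assms(6) unfolding axis_units_def by blast
  have "(\<lambda>x. vadd x (vscale (int m + 2) v)) ` Q n m i \<inter> Q n m j = {}"
    using shifted_Q_disjoint_Q[OF k s] v by simp
  moreover have "\<exists>p\<in>Q n m i. \<exists>q\<in>Q n m j. \<exists>u\<in>axis_units n.
                   vadd (vadd p (vscale (int m + 2) v)) u = q"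
    using shifted_Q_touches_Q[OF _ k s] assms v by simp
  ultimately show ?thesis
    unfolding adjacent_def by blast
qed

end
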